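(* Let $M$ be a matroid on a finite set $E$ with $r(M)>0$. Then $|F(M)|=r(M)$ if and only if $M$ is a unique expansion matroid.
   Context: For a matroid $M=(E,\mathcal{I})$: $\mathcal{B}(M)$ is its family of bases, $r(M)$ the common cardinality of bases, and $r(X)$ the rank of $X\subseteq E$. For $r(M)>0$: $s(M)=\{A\in\mathcal{I}(M): |A|=r(M)-1\}$; $K_M(X)=\{a\in E: r(X\cup\{a\})=r(X)+1\}$ for $X\subseteq E$; $F(M)=\{K_M(X): X\in s(M)\}$ (a set of sets, so $|F(M)|$ counts distinct sets). $M$ is a unique expansion matroid if for every $B\in\mathcal{B}(M)$ and every $A\in s(M)$, whenever $e_1,e_2\in B$ satisfy $A\cup\{e_1\}\in\mathcal{B}(M)$ and $A\cup\{e_2\}\in\mathcal{B}(M)$, then $e_1=e_2$. *)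

theory Defs
  imports Main
begin

definition matroid :: "'a set \<Rightarrow> 'a set set \<Rightarrow> bool" where
  "matroid E \<I> \<longleftrightarrow> finite E \<and> \<I> \<subseteq> Pow E \<and> {} \<in> \<I>
     \<and> (\<forall>A B. B \<in> \<I> \<and> A \<subseteq> B \<longrightarrow> A \<in> \<I>)
     \<and> (\<forall>A B. A \<in> \<I> \<and> B \<in> \<I> \<and> card A < card B \<longrightarrow> (\<exists>x \<in> B - A. insert x A \<in> \<I>))"

definition bases :: "'a set \<Rightarrow> 'a set set \<Rightarrow> 'a set set" where
  "bases E \<I> = {B. B \<in> \<I> \<and> (\<forall>C \<in> \<I>. B \<subseteq> C \<longrightarrow> C = B)}"

definition rank_of :: "'a set \<Rightarrow> 'a set set \<Rightarrow> 'a set \<Rightarrow> nat" where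
  "rank_of E \<I> X = Max (card ` {A. A \<in> \<I> \<and> A \<subseteq> X})"

definition mrank :: "'a set \<Rightarrow> 'a set set \<Rightarrow> nat" where
  "mrank E \<I> = rank_of E \<I> E"

definition sM :: "'a set \<Rightarrow> 'a set set \<Rightarrow> 'a set set" where
  "sM E \<I> = {A. A \<in> \<I> \<and> card A = mrank E \<I> - 1}"

definition KM :: "'a set \<Rightarrow> 'a set set \<Rightarrow> 'a set \<Rightarrow> 'a set" where
  "KM E \<I> X = {a \<in> E. rank_of E \<I> (insert a X) = rank_of E \<I> X + 1}"

definition FM :: "'a set \<Rightarrow> 'a set set \<Rightarrow> 'a set set" where
  "FM E \<I> = KM E \<I> ` sM E \<I>"

definition unique_expansion :: "'a set \<Rightarrow> 'a set set \<Rightarrow> bool" where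
  "unique_expansion E \<I> \<longleftrightarrow>
     (\<forall>B \<in> bases E \<I>. \<forall>A \<in> sM E \<I>. \<forall>e1 \<in> B. \<forall>e2 \<in> B.
        insert e1 A \<in> bases E \<I> \<and> insert e2 A \<in> bases E \<I> \<longrightarrow> e1 = e2)"

end

theory Submission
  imports Defs
begin

text \<open>Fix a basis B. Since K(B - b) \<inter> B = {b}, the sets K(B - b), b \<in> B, are r distinct members
  of F(M), so always |F(M)| \<ge> r, with equality iff every K(A), A \<in> s(M), is one of them.
  If so, two elements of a basis B expanding the same A both lie in K(A) \<inter> B = K(B - b) \<inter> B = {b}.
  Conversely, under unique expansion let A \<in> s(M) and let b \<in> B be the element that expands A
  to a basis (augmentation). No other element of B does, so B - b lies in the closure of A; then
  A \<union> (B - b) has rank r - 1, which forces K(A) = K(B - b).\<close>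

locale matroid_on =
  fixes E :: "'a set" and I :: "'a set set"
  assumes matroid: "matroid E I"
begin

abbreviation r :: nat where "r \<equiv> mrank E I"

lemma finite_ground: "finite E"
  and indep_subset_ground: "A \<in> I \<Longrightarrow> A \<subseteq> E"
  and empty_indep: "{} \<in> I"
  and indep_subset: "B \<in> I \<Longrightarrow> A \<subseteq> B \<Longrightarrow> A \<in> I"
  and indep_augment: "A \<in> I \<Longrightarrow> B \<in> I \<Longrightarrow> card A < card B \<Longrightarrow> \<exists>x \<in> B - A. insert x A \<in> I"
  using matroid unfolding matroid_def by blast+

lemma indep_finite: "A \<in> I \<Longrightarrow> finite A"
  using finite_subset[OF indep_subset_ground finite_ground] .

lemma finite_indeps: "finite I"
  using matroid unfolding matroid_def by (meson finite_Pow_iff finite_subset)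

lemma card_le_rank_of: "J \<in> I \<Longrightarrow> J \<subseteq> X \<Longrightarrow> card J \<le> rank_of E I X"
  unfolding rank_of_def using finite_indeps by (intro Max_ge) auto

lemma rank_of_attained: obtains J where "J \<in> I" "J \<subseteq> X" "card J = rank_of E I X"
proof -
  have "card {} \<in> card ` {A. A \<in> I \<and> A \<subseteq> X}"
    using empty_indep by (intro image_eqI[where x = "{}"]) auto
  then have "rank_of E I X \<in> card ` {A. A \<in> I \<and> A \<subseteq> X}"
    unfolding rank_of_def using finite_indeps by (intro Max_in) auto
  then show thesis using that by auto
qed

lemma rank_of_le_card: "finite X \<Longrightarrow> rank_of E I X \<le> card X"
  by (metis card_mono rank_of_attained)

lemma rank_of_indep: "J \<in> I \<Longrightarrow> rank_of E I J = card J"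
  using card_le_rank_of rank_of_le_card indep_finite by (meson le_antisym order_refl)

lemma rank_of_insert_le: "A \<in> I \<Longrightarrow> rank_of E I (insert e A) \<le> card A + 1"
  using rank_of_le_card[of "insert e A"] indep_finite[of A]
  by (simp add: card_insert_if split: if_splits)

lemma indep_insert_if_rank_of_insert:
  assumes AI: "A \<in> I" and rank_insert: "rank_of E I (insert a A) = card A + 1"
  shows "insert a A \<in> I" "a \<notin> A"
proof -
  obtain J where J: "J \<in> I" "J \<subseteq> insert a A" "card J = card A + 1"
    using rank_of_attained rank_insert by metis
  have "card (insert a A) \<le> card A + 1"
    using indep_finite[OF AI] by (simp add: card_insert_if)
  then have "J = insert a A"
    using J indep_finite[OF AI] card_seteq[of "insert a A" J] by auto
  then show "insert a A \<in> I" "a \<notin> A"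
    using J by (auto simp: insert_absorb)
qed

lemma indep_extend_to_rank:
  assumes "A \<in> I" "A \<subseteq> X"
  obtains J where "A \<subseteq> J" "J \<subseteq> X" "J \<in> I" "card J = rank_of E I X"
proof -
  have "\<exists>J. A \<subseteq> J \<and> J \<subseteq> X \<and> J \<in> I \<and> card J = rank_of E I X"
    using assms
  proof (induction "rank_of E I X - card A" arbitrary: A rule: less_induct)
    case less
    show ?case
    proof (cases "card A < rank_of E I X")
      case False
      then have "card A = rank_of E I X" using card_le_rank_of[OF less.prems] by linarith
      then show ?thesis using less.prems by blast
    next
      case True
      obtain K where K: "K \<in> I" "K \<subseteq> X" "card K = rank_of E I X"
        using rank_of_attained .
      then obtain x where x: "x \<in> K - A" "insert x A \<in> I"
        using indep_augment[OF less.prems(1) K(1)] True by auto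
      have "card (insert x A) = card A + 1"
        using x indep_finite[OF less.prems(1)] by simp
      then have "rank_of E I X - card (insert x A) < rank_of E I X - card A"
        using True by linarith
      moreover have "insert x A \<subseteq> X" using x K less.prems by auto
      ultimately obtain J where "insert x A \<subseteq> J" "J \<subseteq> X" "J \<in> I" "card J = rank_of E I X"
        using less.hyps[OF _ x(2)] by blast
      then show ?thesis by blast
    qed
  qed
  then show thesis using that by (elim exE conjE)
qed

lemma card_indep_le_mrank: "J \<in> I \<Longrightarrow> card J \<le> r"
  unfolding mrank_def using card_le_rank_of indep_subset_ground by blast

lemma bases_iff_card: "B \<in> bases E I \<longleftrightarrow> B \<in> I \<and> card B = r"
proof
  assume B: "B \<in> bases E I"
  then have BI: "B \<in> I" and maximal: "\<And>C. C \<in> I \<Longrightarrow> B \<subseteq> C \<Longrightarrow> C = B"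
    unfolding bases_def by blast+
  obtain J where "B \<subseteq> J" "J \<in> I" "card J = r"
    using indep_extend_to_rank[OF BI indep_subset_ground[OF BI]] unfolding mrank_def .
  then show "B \<in> I \<and> card B = r" using BI maximal by blast
next
  assume B: "B \<in> I \<and> card B = r"
  moreover have "C = B" if "C \<in> I" "B \<subseteq> C" for C
    using card_seteq[OF indep_finite[OF that(1)] that(2)] card_indep_le_mrank[OF that(1)] B by simp
  ultimately show "B \<in> bases E I" unfolding bases_def by blast
qed

lemma basis_exists: obtains B where "B \<in> bases E I"
proof -
  obtain J where "J \<in> I" "J \<subseteq> E" "card J = r"
    unfolding mrank_def by (rule rank_of_attained)
  then show thesis using that bases_iff_card by blast
qed

lemma finite_FM: "finite (FM E I)"
  unfolding FM_def sM_def using finite_indeps by simp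

lemma rank_of_union_spanned:
  assumes AI: "A \<in> I" and spanned: "\<And>e. e \<in> Y \<Longrightarrow> rank_of E I (insert e A) = card A"
  shows "rank_of E I (A \<union> Y) = card A"
proof -
  obtain J where J: "A \<subseteq> J" "J \<subseteq> A \<union> Y" "J \<in> I" "card J = rank_of E I (A \<union> Y)"
    using indep_extend_to_rank[OF AI Un_upper1] .
  have "J \<subseteq> A"
  proof
    fix e assume e: "e \<in> J"
    show "e \<in> A"
    proof (rule ccontr)
      assume "e \<notin> A"
      then have "e \<in> Y" using J e by blast
      have "insert e A \<in> I" using indep_subset[OF J(3)] J(1) e by blast
      then have "card (insert e A) \<le> card A"
        using card_le_rank_of[of "insert e A" "insert e A"] spanned[OF \<open>e \<in> Y\<close>] by simp
      then show False using \<open>e \<notin> A\<close> indep_finite[OF AI] by simp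
    qed
  qed
  then show ?thesis using J by (simp add: subset_antisym)
qed

context
  assumes rank_pos: "r > 0"
begin

lemma KM_iff_insert_basis:
  assumes A: "A \<in> sM E I"
  shows "a \<in> KM E I A \<longleftrightarrow> insert a A \<in> bases E I"
proof -
  have AI: "A \<in> I" and cA: "card A = r - 1" using A unfolding sM_def by auto
  have rA: "rank_of E I A = card A" using rank_of_indep[OF AI] .
  show ?thesis
  proof
    assume "a \<in> KM E I A"
    then have "rank_of E I (insert a A) = card A + 1" unfolding KM_def rA by blast
    then have "insert a A \<in> I" "a \<notin> A" using indep_insert_if_rank_of_insert[OF AI] by blast+
    then show "insert a A \<in> bases E I"
      using cA rank_pos bases_iff_card indep_finite[OF AI] by simp
  next
    assume b: "insert a A \<in> bases E I"
    then have bI: "insert a A \<in> I" and cb: "card (insert a A) = r" using bases_iff_card by auto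
    have "a \<notin> A" using cb cA rank_pos by (auto simp: insert_absorb)
    then have "card (insert a A) = card A + 1" using indep_finite[OF AI] by simp
    then show "a \<in> KM E I A"
      unfolding KM_def using rank_of_indep[OF bI] rA indep_subset_ground[OF bI] by auto
  qed
qed

lemma rank_of_insert_if_not_basis:
  assumes A: "A \<in> sM E I" and not_basis: "insert e A \<notin> bases E I"
  shows "rank_of E I (insert e A) = card A"
proof (rule ccontr)
  have AI: "A \<in> I" and cA: "card A = r - 1" using A unfolding sM_def by auto
  assume "rank_of E I (insert e A) \<noteq> card A"
  then have "rank_of E I (insert e A) = card A + 1"
    using card_le_rank_of[OF AI subset_insertI, of e] rank_of_insert_le[OF AI, of e] by linarith
  then have "insert e A \<in> I" "e \<notin> A" using indep_insert_if_rank_of_insert[OF AI] by blast+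
  then show False
    using not_basis cA rank_pos bases_iff_card indep_finite[OF AI] by simp
qed

lemma KM_subset_if_rank_of_union:
  assumes A: "A \<in> sM E I" and A': "A' \<in> sM E I"
    and rank_union: "rank_of E I (A \<union> A') = r - 1"
  shows "KM E I A \<subseteq> KM E I A'"
proof
  fix x assume "x \<in> KM E I A"
  then have xA_basis: "insert x A \<in> bases E I" using KM_iff_insert_basis[OF A] by blast
  have A'I: "A' \<in> I" and cA': "card A' = r - 1" using A' unfolding sM_def by auto
  define S where "S = insert x (A \<union> A')"
  obtain J where J: "A' \<subseteq> J" "J \<subseteq> S" "J \<in> I" "card J = rank_of E I S"
    using indep_extend_to_rank[OF A'I, of S] S_def by auto
  have "r \<le> rank_of E I S"
    using card_le_rank_of[of "insert x A" S] xA_basis bases_iff_card S_def by auto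
  then have cJ: "card J = r" using J card_indep_le_mrank by (metis le_antisym)
  have "\<not> J \<subseteq> A \<union> A'"
    using card_le_rank_of[OF J(3), of "A \<union> A'"] rank_union cJ rank_pos by auto
  then have "x \<in> J" "x \<notin> A'" using J S_def by auto
  then have "insert x A' = J"
    using J cJ cA' rank_pos indep_finite[OF A'I] indep_finite[OF J(3)]
    by (intro card_subset_eq) auto
  then show "x \<in> KM E I A'" using KM_iff_insert_basis[OF A'] J cJ bases_iff_card by auto
qed

lemma KM_eq_if_rank_of_union:
  assumes "A \<in> sM E I" "A' \<in> sM E I" "rank_of E I (A \<union> A') = r - 1"
  shows "KM E I A = KM E I A'"
  using assms KM_subset_if_rank_of_union by (metis Un_commute subset_antisym)

lemma basis_delete_in_sM: "B \<in> bases E I \<Longrightarrow> b \<in> B \<Longrightarrow> B - {b} \<in> sM E I"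
  unfolding sM_def using bases_iff_card indep_subset by auto

lemma KM_basis_delete_Int_basis:
  assumes B: "B \<in> bases E I" and b: "b \<in> B"
  shows "KM E I (B - {b}) \<inter> B = {b}"
proof -
  have BI: "B \<in> I" and card_B: "card B = r" using B bases_iff_card by auto
  note expands = KM_iff_insert_basis[OF basis_delete_in_sM[OF B b]]
  have "x = b" if x: "x \<in> KM E I (B - {b}) \<inter> B" for x
  proof (rule ccontr)
    assume "x \<noteq> b"
    then have "insert x (B - {b}) \<subset> B" using x b by auto
    then have "card (insert x (B - {b})) < r"
      using psubset_card_mono[OF indep_finite[OF BI]] card_B by simp
    moreover have "insert x (B - {b}) \<in> bases E I" using x expands by blast
    ultimately show False using bases_iff_card by simp
  qed
  moreover have "b \<in> KM E I (B - {b})" using expands insert_Diff[OF b] B by simp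
  ultimately show ?thesis using b by blast
qed

lemma inj_on_KM_basis_delete:
  "B \<in> bases E I \<Longrightarrow> inj_on (\<lambda>b. KM E I (B - {b})) B"
  by (rule inj_onI) (metis KM_basis_delete_Int_basis[of B] singleton_inject)

lemma KM_basis_delete_subset_FM:
  "B \<in> bases E I \<Longrightarrow> (\<lambda>b. KM E I (B - {b})) ` B \<subseteq> FM E I"
  unfolding FM_def using basis_delete_in_sM by blast

lemma card_KM_basis_delete:
  "B \<in> bases E I \<Longrightarrow> card ((\<lambda>b. KM E I (B - {b})) ` B) = r"
  using card_image[OF inj_on_KM_basis_delete] bases_iff_card by simp

lemma card_FM_eq_mrank_iff:
  assumes "B \<in> bases E I"
  shows "card (FM E I) = r \<longleftrightarrow> FM E I = (\<lambda>b. KM E I (B - {b})) ` B"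
proof
  assume "card (FM E I) = r"
  then show "FM E I = (\<lambda>b. KM E I (B - {b})) ` B"
    using card_subset_eq[OF finite_FM KM_basis_delete_subset_FM[OF assms]]
      card_KM_basis_delete[OF assms] by simp
qed (use card_KM_basis_delete[OF assms] in simp)

lemma FM_eq_KM_basis_delete_if_unique_expansion:
  assumes unique: "unique_expansion E I" and B: "B \<in> bases E I"
  shows "FM E I = (\<lambda>b. KM E I (B - {b})) ` B"
proof (rule subset_antisym[OF subsetI KM_basis_delete_subset_FM[OF B]])
  fix K assume "K \<in> FM E I"
  then obtain A where A: "A \<in> sM E I" and K: "K = KM E I A" unfolding FM_def by blast
  have AI: "A \<in> I" and cA: "card A = r - 1" using A unfolding sM_def by auto
  have "card A < card B" using B bases_iff_card cA rank_pos by simp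
  then obtain b where b: "b \<in> B - A" "insert b A \<in> I"
    using indep_augment[OF AI] B bases_iff_card by blast
  then have b_basis: "insert b A \<in> bases E I"
    using indep_finite[OF AI] cA rank_pos bases_iff_card by auto
  have "insert e A \<notin> bases E I" if "e \<in> B - {b}" for e
    using unique[unfolded unique_expansion_def, rule_format, OF B A, of e b] b b_basis that by blast
  then have "rank_of E I (A \<union> (B - {b})) = card A"
    using rank_of_union_spanned[OF AI rank_of_insert_if_not_basis[OF A]] by blast
  then have "KM E I A = KM E I (B - {b})"
    using KM_eq_if_rank_of_union[OF A basis_delete_in_sM[OF B]] b cA by simp
  then show "K \<in> (\<lambda>b. KM E I (B - {b})) ` B" using K b by blast
qed

lemma card_FM_eq_mrank_if_unique_expansion:
  assumes "unique_expansion E I"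
  shows "card (FM E I) = r"
proof -
  obtain B where B: "B \<in> bases E I" by (rule basis_exists)
  show ?thesis
    using card_FM_eq_mrank_iff[OF B] FM_eq_KM_basis_delete_if_unique_expansion[OF assms B] by blast
qed

lemma unique_expansion_if_card_FM_eq_mrank:
  assumes card_FM: "card (FM E I) = r"
  shows "unique_expansion E I"
  unfolding unique_expansion_def
proof (intro ballI impI)
  fix B A e1 e2
  assume B: "B \<in> bases E I" and A: "A \<in> sM E I" and e: "e1 \<in> B" "e2 \<in> B"
    and expand: "insert e1 A \<in> bases E I \<and> insert e2 A \<in> bases E I"
  have "KM E I A \<in> (\<lambda>b. KM E I (B - {b})) ` B"
    using card_FM_eq_mrank_iff[OF B] card_FM A unfolding FM_def by blast
  then obtain b where b: "b \<in> B" and KM_A: "KM E I A = KM E I (B - {b})" by blast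
  have "e1 \<in> KM E I (B - {b}) \<inter> B" "e2 \<in> KM E I (B - {b}) \<inter> B"
    using KM_iff_insert_basis[OF A] expand e unfolding KM_A by blast+
  then show "e1 = e2"
    unfolding KM_basis_delete_Int_basis[OF B b] by blast
qed

end

end

theorem theorem5:
  fixes E :: "'a set" and \<I> :: "'a set set"
  assumes "matroid E \<I>" and "mrank E \<I> > 0"
  shows "card (FM E \<I>) = mrank E \<I> \<longleftrightarrow> unique_expansion E \<I>"
proof -
  interpret matroid_on E \<I> by (fact matroid_on.intro[OF assms(1)])
  show ?thesis
    using unique_expansion_if_card_FM_eq_mrank[OF assms(2)]
      card_FM_eq_mrank_if_unique_expansion[OF assms(2)] by (rule iffI)
qed

end
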